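(* Suppose $X$ is a Suslin line. Then $\pi Nt(X)\geq\omega_1$.
   Context: A Suslin line is a linearly ordered set with the order topology that has the countable chain condition (every family of pairwise disjoint nonempty open sets is countable) but is not separable. Families of open sets are ordered by inclusion; a family is $\kappa^{\mathrm{op}}$-like if no member is contained in $\kappa$-many members. $\pi Nt(X)$ is the least $\kappa\geq\omega$ such that $X$ has a $\kappa^{\mathrm{op}}$-like $\pi$-base. *)

theory Defs
  imports "HOL-Analysis.Analysis"
begin

text \<open>A linearly ordered set with the order topology is modelled by a type of class
  linorder_topology (the topology is the order topology).\<close>

definition ccc_space :: "'a::topological_space itself \<Rightarrow> bool" where
  "ccc_space _ \<longleftrightarrow>
     (\<forall>F::'a set set. (\<forall>U\<in>F. open U \<and> U \<noteq> {}) \<and> pairwise disjnt F \<longrightarrow> countable F)"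

definition separable_space :: "'a::topological_space itself \<Rightarrow> bool" where
  "separable_space _ \<longleftrightarrow> (\<exists>D::'a set. countable D \<and> closure D = UNIV)"

definition suslin_line :: "'a::linorder_topology itself \<Rightarrow> bool" where
  "suslin_line T \<longleftrightarrow> ccc_space T \<and> \<not> separable_space T"

definition pi_base :: "'a::topological_space set set \<Rightarrow> bool" where
  "pi_base B \<longleftrightarrow> (\<forall>U\<in>B. open U \<and> U \<noteq> {}) \<and>
     (\<forall>W. open W \<and> W \<noteq> {} \<longrightarrow> (\<exists>U\<in>B. U \<subseteq> W))"

definition op_like :: "'k rel \<Rightarrow> 'a set set \<Rightarrow> bool" where
  "op_like \<kappa> B \<longleftrightarrow> (\<forall>U\<in>B. \<not> ((\<kappa>, card_of {V\<in>B. U \<subseteq> V}) \<in> ordLeq))"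

end

theory Submission
  imports Defs
begin

text \<open>Since \<open>\<omega> \<le> \<kappa> < \<omega>\<^sub>1\<close> forces \<open>\<kappa> = \<omega>\<close>, it suffices to show that in a Suslin line
  some member of any \<open>\<pi>\<close>-base \<open>B\<close> lies below infinitely many members of \<open>B\<close>.
  Build levels: a maximal disjoint family of convex open pieces \<open>C \<subseteq> U \<in> B\<close>, where at level
  \<open>n + 1\<close> the set \<open>U\<close> must lie strictly inside a piece of level \<open>n\<close>. By ccc every level is
  countable, so one point from each piece together with the countably many isolated points
  forms a countable set \<open>D\<close>, and non-separability yields a nonempty open convex \<open>S\<close> missing
  \<open>D\<close>. At every level some piece meets the middle of \<open>S\<close>; as it also contains a point
  outside \<open>S\<close>, convexity makes it swallow a whole end of \<open>S\<close>. Hence one of the two ends of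
  \<open>S\<close> lies in a piece of every level, and the corresponding members of \<open>B\<close> form an infinite
  strictly decreasing chain above a member of \<open>B\<close> inside that end.\<close>

definition order_convex :: "'a::order set \<Rightarrow> bool" where
  "order_convex S \<longleftrightarrow> (\<forall>x\<in>S. \<forall>z\<in>S. {x..z} \<subseteq> S)"

lemma order_convex_lessThan: "order_convex {..<a::'a::order}"
  unfolding order_convex_def by (auto intro: le_less_trans)

lemma order_convex_greaterThan: "order_convex {a::'a::order<..}"
  unfolding order_convex_def by (auto intro: less_le_trans)

lemma open_order_convex_nbhd:
  fixes U :: "'a::linorder_topology set"
  assumes "open U" "x \<in> U"
  obtains C where "open C" "order_convex C" "x \<in> C" "C \<subseteq> U"
proof -
  from assms(1) have "generate_topology (range lessThan \<union> range greaterThan) U"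
    unfolding open_generated_order .
  then have "\<exists>C. open C \<and> order_convex C \<and> x \<in> C \<and> C \<subseteq> U"
    using assms(2)
  proof (induction arbitrary: x)
    case UNIV
    have "order_convex (UNIV :: 'a set)"
      by (simp add: order_convex_def)
    then show ?case
      by blast
  next
    case (Int A B)
    obtain C where "open C" "order_convex C" "x \<in> C" "C \<subseteq> A"
      using Int.IH(1) Int.prems by blast
    moreover obtain D where "open D" "order_convex D" "x \<in> D" "D \<subseteq> B"
      using Int.IH(2) Int.prems by blast
    moreover have "order_convex (C \<inter> D)"
      using \<open>order_convex C\<close> \<open>order_convex D\<close> unfolding order_convex_def by blast
    ultimately show ?case
      by (intro exI[of _ "C \<inter> D"]) auto
  next
    case (UN K)
    then obtain k where "k \<in> K" "x \<in> k"
      by blast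
    then obtain C where "open C" "order_convex C" "x \<in> C" "C \<subseteq> k"
      using UN.IH by blast
    then show ?case
      using \<open>k \<in> K\<close> by blast
  next
    case (Basis S)
    then have "open S" "order_convex S"
      by (auto simp: order_convex_lessThan order_convex_greaterThan)
    with Basis show ?case
      by blast
  qed
  with that show ?thesis
    by blast
qed

lemma order_convex_tail:
  fixes C S :: "'a::linorder set"
  assumes S: "order_convex S" and C: "order_convex C" and w: "w \<in> C \<inter> S" and d: "d \<in> C - S"
  shows "S \<inter> {..w} \<subseteq> C \<or> S \<inter> {w..} \<subseteq> C"
proof (cases "d < w")
  case True
  have "v \<in> C" if v: "v \<in> S" "v \<le> w" for v
  proof -
    have "d \<notin> {v..w}"
      using S v w d unfolding order_convex_def by blast
    then have "d \<le> v"
      using \<open>d < w\<close> by auto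
    then have "v \<in> {d..w}"
      using v by simp
    then show ?thesis
      using C w d unfolding order_convex_def by blast
  qed
  then show ?thesis by blast
next
  case False
  have "v \<in> C" if v: "v \<in> S" "w \<le> v" for v
  proof -
    have "d \<notin> {w..v}"
      using S v w d unfolding order_convex_def by blast
    then have "v \<le> d"
      using \<open>\<not> d < w\<close> by auto
    then have "v \<in> {w..d}"
      using v by simp
    then show ?thesis
      using C w d unfolding order_convex_def by blast
  qed
  then show ?thesis by blast
qed

lemma exists_maximal_disjoint_subfamily:
  "\<exists>F. F \<subseteq> K \<and> disjoint_family_on f F \<and>
     (\<forall>G. F \<subseteq> G \<and> G \<subseteq> K \<and> disjoint_family_on f G \<longrightarrow> G = F)"
proof -
  let ?A = "{F. F \<subseteq> K \<and> disjoint_family_on f F}"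
  have "\<Union>\<C> \<in> ?A" if "\<C> \<in> chains ?A" for \<C>
  proof -
    have sub: "\<C> \<subseteq> ?A" and chain: "chain\<^sub>\<subseteq> \<C>"
      using that by (auto simp: chains_def)
    have "f p \<inter> f q = {}" if pq: "p \<in> \<Union>\<C>" "q \<in> \<Union>\<C>" "p \<noteq> q" for p q
    proof -
      obtain F G where FG: "F \<in> \<C>" "G \<in> \<C>" "p \<in> F" "q \<in> G"
        using pq by blast
      then have "F \<subseteq> G \<or> G \<subseteq> F"
        using chain unfolding chain_subset_def by blast
      then obtain H where "H \<in> \<C>" "p \<in> H" "q \<in> H"
        using FG by blast
      then have "disjoint_family_on f H" "p \<in> H" "q \<in> H"
        using sub by auto
      then show ?thesis
        using pq(3) by (rule disjoint_family_onD)
    qed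
    then show ?thesis
      using sub unfolding disjoint_family_on_def by blast
  qed
  then obtain M where "M \<in> ?A" "\<forall>X\<in>?A. M \<subseteq> X \<longrightarrow> X = M"
    using Zorn_Lemma[of ?A] by blast
  then show ?thesis
    by blast
qed

definition maximal_disjoint_subfamily :: "('i \<Rightarrow> 'a set) \<Rightarrow> 'i set \<Rightarrow> 'i set" where
  "maximal_disjoint_subfamily f K =
     (SOME F. F \<subseteq> K \<and> disjoint_family_on f F \<and>
        (\<forall>G. F \<subseteq> G \<and> G \<subseteq> K \<and> disjoint_family_on f G \<longrightarrow> G = F))"

lemma maximal_disjoint_subfamily:
  "maximal_disjoint_subfamily f K \<subseteq> K"
  "disjoint_family_on f (maximal_disjoint_subfamily f K)"
  "maximal_disjoint_subfamily f K \<subseteq> G \<Longrightarrow> G \<subseteq> K \<Longrightarrow> disjoint_family_on f G \<Longrightarrow>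
     G = maximal_disjoint_subfamily f K"
proof -
  note max = someI_ex[OF exists_maximal_disjoint_subfamily[of K f], folded maximal_disjoint_subfamily_def]
  show "maximal_disjoint_subfamily f K \<subseteq> K" "disjoint_family_on f (maximal_disjoint_subfamily f K)"
    using max by simp_all
  show "G = maximal_disjoint_subfamily f K"
    if "maximal_disjoint_subfamily f K \<subseteq> G" "G \<subseteq> K" "disjoint_family_on f G"
    using max that by simp
qed

lemma maximal_disjoint_subfamily_meets:
  assumes "p \<in> K" "f p \<noteq> {}"
  shows "\<exists>q\<in>maximal_disjoint_subfamily f K. f p \<inter> f q \<noteq> {}"
proof (rule ccontr)
  let ?F = "maximal_disjoint_subfamily f K"
  assume none: "\<not> (\<exists>q\<in>?F. f p \<inter> f q \<noteq> {})"
  then have "disjoint_family_on f (insert p ?F)"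
    using maximal_disjoint_subfamily(2)[of f K] unfolding disjoint_family_on_def by blast
  moreover have "insert p ?F \<subseteq> K"
    using assms(1) maximal_disjoint_subfamily(1)[of f K] by blast
  ultimately have "insert p ?F = ?F"
    using maximal_disjoint_subfamily(3)[of f K "insert p ?F"] by blast
  then show False
    using none assms(2) by blast
qed

lemma countable_disjoint_family_on_ccc:
  assumes ccc: "ccc_space TYPE('a::topological_space)"
    and disj: "disjoint_family_on f F"
    and nonempty_open: "\<And>p. p \<in> F \<Longrightarrow> open (f p :: 'a set) \<and> f p \<noteq> {}"
  shows "countable F"
proof -
  have "inj_on f F"
  proof (rule inj_onI, rule ccontr)
    fix p q assume "p \<in> F" "q \<in> F" "f p = f q" "p \<noteq> q"
    then have "f p \<inter> f q = {}"
      by (intro disjoint_family_onD[OF disj])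
    then show False
      using \<open>f p = f q\<close> nonempty_open[OF \<open>p \<in> F\<close>] by simp
  qed
  moreover have "pairwise disjnt (f ` F)"
    by (rule pairwise_imageI) (use disjoint_family_onD[OF disj] in \<open>simp add: disjnt_def\<close>)
  moreover have "\<forall>U\<in>f ` F. open U \<and> U \<noteq> {}"
    using nonempty_open by blast
  ultimately show ?thesis
    using ccc countable_image_inj_on unfolding ccc_space_def by blast
qed

lemma countable_isolated_points:
  assumes "ccc_space TYPE('a::topological_space)"
  shows "countable {x::'a. open {x}}"
  by (rule countable_disjoint_family_on_ccc[OF assms, of "\<lambda>x. {x}"])
    (auto simp: disjoint_family_on_def)

lemma open_singleton_if_finite_open:
  fixes S :: "'a::t1_space set"
  assumes "open S" "finite S" "x \<in> S"
  shows "open {x}"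
proof -
  have "{x} = S - (S - {x})"
    using assms(3) by blast
  then show ?thesis
    using assms by (metis finite_Diff finite_imp_closed open_Diff)
qed

lemma infinite_obtain_sorted_list:
  fixes S :: "'a::linorder set"
  assumes "infinite S"
  obtains xs where "sorted_wrt (<) xs" "length xs = n" "set xs \<subseteq> S"
proof -
  obtain F where "finite F" "card F = n" "F \<subseteq> S"
    using infinite_arbitrarily_large[OF assms] by blast
  then show ?thesis
    using that[of "sorted_list_of_set F"] by simp
qed

lemma downward_closed_dichotomy:
  fixes P Q :: "nat \<Rightarrow> bool"
  assumes "\<And>k. P k \<or> Q k" "\<And>k n. P k \<Longrightarrow> n \<le> k \<Longrightarrow> P n" "\<And>k n. Q k \<Longrightarrow> n \<le> k \<Longrightarrow> Q n"
  shows "(\<forall>k. P k) \<or> (\<forall>k. Q k)"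
  using assms by (metis max.cobounded1 max.cobounded2)

definition convex_pieces :: "'a::linorder_topology set set \<Rightarrow> ('a set \<Rightarrow> bool) \<Rightarrow> ('a set \<times> 'a set) set" where
  "convex_pieces B P = {(C, U). U \<in> B \<and> P U \<and> open C \<and> C \<noteq> {} \<and> order_convex C \<and> C \<subseteq> U}"

primrec level :: "'a::linorder_topology set set \<Rightarrow> nat \<Rightarrow> ('a set \<times> 'a set) set" where
  "level B 0 = maximal_disjoint_subfamily fst (convex_pieces B (\<lambda>_. True))"
| "level B (Suc n) = maximal_disjoint_subfamily fst (convex_pieces B (\<lambda>U. \<exists>p\<in>level B n. U \<subset> fst p))"

lemma level_subset_convex_pieces: "\<exists>P. level B n \<subseteq> convex_pieces B P"
proof (cases n)
  case 0
  have "level B 0 \<subseteq> convex_pieces B (\<lambda>_. True)"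
    by (simp add: maximal_disjoint_subfamily(1))
  with 0 show ?thesis
    by blast
next
  case (Suc m)
  have "level B (Suc m) \<subseteq> convex_pieces B (\<lambda>U. \<exists>p\<in>level B m. U \<subset> fst p)"
    by (simp add: maximal_disjoint_subfamily(1))
  with Suc show ?thesis
    by blast
qed

lemma level_piece:
  assumes "p \<in> level B n"
  shows "snd p \<in> B" "open (fst p)" "fst p \<noteq> {}" "order_convex (fst p)" "fst p \<subseteq> snd p"
proof -
  obtain P where "p \<in> convex_pieces B P"
    using level_subset_convex_pieces[of B n] assms by blast
  then show "snd p \<in> B" "open (fst p)" "fst p \<noteq> {}" "order_convex (fst p)" "fst p \<subseteq> snd p"
    by (auto simp: convex_pieces_def)
qed

lemma disjoint_family_on_level: "disjoint_family_on fst (level B n)"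
  by (cases n) (simp_all add: maximal_disjoint_subfamily(2))

lemma level_parent:
  assumes "p \<in> level B (Suc n)"
  shows "\<exists>q\<in>level B n. snd p \<subset> fst q"
proof -
  have "p \<in> convex_pieces B (\<lambda>U. \<exists>p\<in>level B n. U \<subset> fst p)"
    by (rule subsetD[OF maximal_disjoint_subfamily(1)]) (use assms in simp)
  then show ?thesis
    by (cases p) (simp add: convex_pieces_def)
qed

lemma level_descend:
  assumes "p \<in> level B k" "n \<le> k"
  shows "\<exists>q\<in>level B n. fst p \<subseteq> fst q"
  using assms
proof (induction k arbitrary: p)
  case 0
  then show ?case by auto
next
  case (Suc k)
  show ?case
  proof (cases "n = Suc k")
    case True
    then show ?thesis using Suc.prems(1) by blast
  next
    case False
    obtain q where "q \<in> level B k" "snd p \<subset> fst q"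
      using level_parent[OF Suc.prems(1)] by blast
    moreover have "n \<le> k"
      using False Suc.prems(2) by simp
    ultimately show ?thesis
      using Suc.IH level_piece(5)[OF Suc.prems(1)] by (meson order.trans psubset_imp_subset)
  qed
qed

lemma maximal_convex_pieces_meet:
  fixes B :: "'a::linorder_topology set set"
  assumes "pi_base B" "open W" "W \<noteq> {}" "\<And>U. U \<in> B \<Longrightarrow> U \<subseteq> W \<Longrightarrow> P U"
  shows "\<exists>p\<in>maximal_disjoint_subfamily fst (convex_pieces B P). fst p \<inter> W \<noteq> {}"
proof -
  obtain U where U: "U \<in> B" "U \<subseteq> W" "open U" "U \<noteq> {}"
    using assms(1-3) unfolding pi_base_def by blast
  then obtain x where "x \<in> U" by blast
  then obtain C where C: "open C" "order_convex C" "x \<in> C" "C \<subseteq> U"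
    using open_order_convex_nbhd U(3) by metis
  then have "(C, U) \<in> convex_pieces B P"
    using U assms(4) unfolding convex_pieces_def by auto
  then have "\<exists>q\<in>maximal_disjoint_subfamily fst (convex_pieces B P). fst (C, U) \<inter> fst q \<noteq> {}"
    by (rule maximal_disjoint_subfamily_meets) (use C(3) in auto)
  then obtain q where "q \<in> maximal_disjoint_subfamily fst (convex_pieces B P)" "C \<inter> fst q \<noteq> {}"
    by auto
  then show ?thesis
    using C(4) U(2) by blast
qed

lemma level_meets_open:
  fixes B :: "'a::linorder_topology set set"
  assumes "pi_base B" "open W" "W \<noteq> {}" "\<forall>x\<in>W. \<not> open {x}"
  shows "\<exists>p\<in>level B n. fst p \<inter> W \<noteq> {}"
  using assms(2-4)
proof (induction n arbitrary: W)
  case 0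
  then show ?case
    using maximal_convex_pieces_meet[OF assms(1)] by simp
next
  case (Suc n)
  then obtain q where q: "q \<in> level B n" "fst q \<inter> W \<noteq> {}"
    by blast
  then obtain x where x: "x \<in> fst q \<inter> W"
    by blast
  have "open (fst q \<inter> W)"
    using level_piece(2)[OF q(1)] Suc.prems(1) by blast
  then have "fst q \<inter> W \<noteq> {x}"
    using Suc.prems(3) x by auto
  then obtain y where y: "y \<in> fst q \<inter> W" "y \<noteq> x"
    using x by blast
  \<comment> \<open>removing \<open>y\<close> forces every member of \<open>B\<close> below \<open>?W\<close> to lie strictly inside \<open>fst q\<close>\<close>
  let ?W = "fst q \<inter> W - {y}"
  have "open ?W" "?W \<noteq> {}"
    using \<open>open (fst q \<inter> W)\<close> x y by (auto intro: open_Diff)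
  then have "\<exists>p\<in>level B (Suc n). fst p \<inter> ?W \<noteq> {}"
    unfolding level.simps
    by (rule maximal_convex_pieces_meet[OF assms(1)]) (use y q(1) in blast)
  then show ?case
    by blast
qed

lemma countable_level:
  assumes "ccc_space TYPE('a::linorder_topology)"
  shows "countable (level (B :: 'a set set) n)"
  by (rule countable_disjoint_family_on_ccc[OF assms disjoint_family_on_level]) (simp add: level_piece)

lemma level_chain_infinite_supersets:
  fixes B :: "'a::linorder_topology set set"
  assumes "pi_base B" "open V" "V \<noteq> {}" "\<And>n. \<exists>p\<in>level B n. V \<subseteq> fst p"
  shows "\<exists>W\<in>B. infinite {U\<in>B. W \<subseteq> U}"
proof -
  obtain p where p: "\<And>n. p n \<in> level B n" "\<And>n. V \<subseteq> fst (p n)"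
    using assms(4) by metis
  obtain v where v: "v \<in> V"
    using assms(3) by blast
  have shrink: "snd (p (Suc n)) \<subset> snd (p n)" for n
  proof -
    obtain q where q: "q \<in> level B n" "snd (p (Suc n)) \<subset> fst q"
      using level_parent[OF p(1)] by blast
    \<comment> \<open>the parent \<open>q\<close> and \<open>p n\<close> share the point \<open>v\<close>, so they coincide by disjointness\<close>
    have "v \<in> fst q"
      using q(2) level_piece(5)[OF p(1)] p(2) v by blast
    then have "q = p n"
      using disjoint_family_on_level[of B n] q(1) p v unfolding disjoint_family_on_def by blast
    then show ?thesis
      using q(2) level_piece(5)[OF p(1)] by blast
  qed
  then have "strict_mono (\<lambda>n. - snd (p n))"
    by (simp add: strict_mono_Suc_iff)
  then have "inj (\<lambda>n. snd (p n))"
    by (intro injI) (metis compl_eq_compl_iff strict_mono_eq)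
  then have "infinite (range (\<lambda>n. snd (p n)))"
    using range_inj_infinite by blast
  moreover obtain W where W: "W \<in> B" "W \<subseteq> V"
    using assms(1-3) unfolding pi_base_def by blast
  moreover have "range (\<lambda>n. snd (p n)) \<subseteq> {U\<in>B. W \<subseteq> U}"
    using level_piece(1,5)[OF p(1)] p(2) W(2) by blast
  ultimately show ?thesis
    using infinite_super by blast
qed

lemma open_subset_of_every_level:
  fixes B :: "'a::linorder_topology set set"
  assumes B: "pi_base B"
    and S: "open S" "order_convex S" "S \<noteq> {}" "\<forall>x\<in>S. \<not> open {x}"
    and outside: "\<And>n p. p \<in> level B n \<Longrightarrow> \<not> fst p \<subseteq> S"
  shows "\<exists>V. open V \<and> V \<noteq> {} \<and> (\<forall>n. \<exists>p\<in>level B n. V \<subseteq> fst p)"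
proof -
  have "infinite S"
  proof
    assume "finite S"
    moreover obtain x where "x \<in> S"
      using S(3) by blast
    ultimately show False
      using open_singleton_if_finite_open[OF S(1)] S(4) by blast
  qed
  then obtain xs where xs: "sorted_wrt (<) xs" "length xs = 5" "set xs \<subseteq> S"
    by (rule infinite_obtain_sorted_list)
  define q where "q i = xs ! i" for i
  have q_in: "q i \<in> S" if "i < 5" for i
    using xs that unfolding q_def by (metis nth_mem subsetD)
  have q_less: "q i < q j" if "i < j" "j < 5" for i j
    using xs that unfolding q_def by (simp add: sorted_wrt_iff_nth_less)
  define L where "L = S \<inter> {..<q 1}"
  define R where "R = S \<inter> {q 3<..}"
  define M where "M = S \<inter> {q 1<..<q 3}"
  have "q 0 < q 1" "q 1 < q 2" "q 2 < q 3" "q 3 < q 4"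
    by (simp_all add: q_less)
  moreover have "q 0 \<in> S" "q 2 \<in> S" "q 4 \<in> S"
    by (simp_all add: q_in)
  ultimately have "q 0 \<in> L" "q 4 \<in> R" "q 2 \<in> M"
    unfolding L_def R_def M_def by auto
  moreover have "open L" "open R" "open M"
    using S(1) unfolding L_def R_def M_def by auto
  ultimately have L: "open L" "L \<noteq> {}" and R: "open R" "R \<noteq> {}" and M: "open M" "M \<noteq> {}"
    by auto
  \<comment> \<open>a piece meeting \<open>M\<close> sticks out of \<open>S\<close>, so by convexity it contains \<open>L\<close> or \<open>R\<close>\<close>
  have tails: "(\<exists>p\<in>level B k. L \<subseteq> fst p) \<or> (\<exists>p\<in>level B k. R \<subseteq> fst p)" for k
  proof -
    have "\<forall>x\<in>M. \<not> open {x}"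
      using S(4) unfolding M_def by blast
    then obtain p where p: "p \<in> level B k" "fst p \<inter> M \<noteq> {}"
      using level_meets_open[OF B M] by blast
    then obtain w where "w \<in> fst p" "w \<in> M"
      by blast
    then have w: "w \<in> fst p \<inter> S" "q 1 < w" "w < q 3"
      unfolding M_def by auto
    obtain d where "d \<in> fst p - S"
      using outside[OF p(1)] by blast
    then have "S \<inter> {..w} \<subseteq> fst p \<or> S \<inter> {w..} \<subseteq> fst p"
      using order_convex_tail[OF S(2) level_piece(4)[OF p(1)] w(1)] by blast
    moreover have "L \<subseteq> S \<inter> {..w}" "R \<subseteq> S \<inter> {w..}"
      using w unfolding L_def R_def by auto
    ultimately show ?thesis
      using p(1) by blast
  qed
  have descend: "\<exists>p\<in>level B n. V \<subseteq> fst p"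
    if cover: "\<exists>p\<in>level B k. V \<subseteq> fst p" and "n \<le> k" for V k n
  proof -
    obtain p where "p \<in> level B k" "V \<subseteq> fst p"
      using cover by blast
    moreover obtain p' where "p' \<in> level B n" "fst p \<subseteq> fst p'"
      using level_descend[OF \<open>p \<in> level B k\<close> \<open>n \<le> k\<close>] by blast
    ultimately show ?thesis
      by blast
  qed
  from downward_closed_dichotomy[OF tails descend descend]
  show ?thesis
  proof
    assume "\<forall>k. \<exists>p\<in>level B k. L \<subseteq> fst p"
    then show ?thesis
      using L by blast
  next
    assume "\<forall>k. \<exists>p\<in>level B k. R \<subseteq> fst p"
    then show ?thesis
      using R by blast
  qed
qed

lemma nonseparable_open_order_convex_avoiding:
  assumes "\<not> separable_space TYPE('a::linorder_topology)" "countable (D :: 'a set)"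
  obtains S where "open S" "order_convex S" "S \<noteq> {}" "S \<inter> D = {}"
proof -
  obtain x where "x \<notin> closure D"
    using assms unfolding separable_space_def by blast
  then obtain S where "open S" "order_convex S" "x \<in> S" "S \<subseteq> - closure D"
    using open_order_convex_nbhd[of "- closure D" x] by blast
  then show ?thesis
    using closure_subset that by blast
qed

lemma suslin_line_pi_base_infinite_supersets:
  fixes B :: "'a::linorder_topology set set"
  assumes "suslin_line TYPE('a)" "pi_base B"
  shows "\<exists>W\<in>B. infinite {U\<in>B. W \<subseteq> U}"
proof -
  have ccc: "ccc_space TYPE('a)" and nonsep: "\<not> separable_space TYPE('a)"
    using assms(1) unfolding suslin_line_def by auto
  define pick where "pick p = (SOME x. x \<in> fst p)" for p :: "'a set \<times> 'a set"
  have pick: "pick p \<in> fst p" if "p \<in> level B n" for p n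
    using level_piece(3)[OF that] unfolding pick_def by (simp add: some_in_eq)
  define D where "D = pick ` (\<Union>n. level B n) \<union> {x. open {x}}"
  have "countable D"
    unfolding D_def using countable_level[OF ccc] countable_isolated_points[OF ccc] by auto
  then obtain S where S: "open S" "order_convex S" "S \<noteq> {}" "S \<inter> D = {}"
    using nonseparable_open_order_convex_avoiding[OF nonsep] by blast
  have no_isolated: "\<forall>x\<in>S. \<not> open {x}"
    using S(4) unfolding D_def by auto
  have not_inside: "\<not> fst p \<subseteq> S" if "p \<in> level B n" for n p
  proof -
    have "pick p \<in> D"
      unfolding D_def using that by auto
    then show ?thesis
      using pick[OF that] S(4) by blast
  qed
  from open_subset_of_every_level[OF assms(2) S(1-3) no_isolated not_inside]
  obtain V where V: "open V \<and> V \<noteq> {} \<and> (\<forall>n. \<exists>p\<in>level B n. V \<subseteq> fst p)" ..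
  then show ?thesis
    by (intro level_chain_infinite_supersets[OF assms(2), of V]) auto
qed

lemma op_like_finite_supersets:
  assumes "op_like \<kappa> B" "(\<kappa>, natLeq) \<in> ordLeq" "U \<in> B"
  shows "finite {V\<in>B. U \<subseteq> V}"
proof (rule ccontr)
  assume "infinite {V\<in>B. U \<subseteq> V}"
  then have "(natLeq, card_of {V\<in>B. U \<subseteq> V}) \<in> ordLeq"
    using infinite_iff_natLeq_ordLeq by blast
  then have "(\<kappa>, card_of {V\<in>B. U \<subseteq> V}) \<in> ordLeq"
    using assms(2) ordLeq_transitive by blast
  then show False
    using assms(1,3) unfolding op_like_def by blast
qed

theorem theorem2p26:
  assumes "suslin_line TYPE('a::linorder_topology)"
  shows "\<forall>\<kappa>::'k rel. Card_order \<kappa> \<and> (natLeq, \<kappa>) \<in> ordLeq \<and> (\<kappa>, cardSuc natLeq) \<in> ordLess \<longrightarrow>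
           \<not> (\<exists>B::'a set set. pi_base B \<and> op_like \<kappa> B)"
proof (intro allI impI notI)
  fix \<kappa> :: "'k rel"
  assume \<kappa>: "Card_order \<kappa> \<and> (natLeq, \<kappa>) \<in> ordLeq \<and> (\<kappa>, cardSuc natLeq) \<in> ordLess"
    and "\<exists>B::'a set set. pi_base B \<and> op_like \<kappa> B"
  then obtain B :: "'a set set" where B: "pi_base B" "op_like \<kappa> B"
    by blast
  have "(\<kappa>, natLeq) \<in> ordLeq"
    using \<kappa> cardSuc_ordLeq_ordLess[OF natLeq_Card_order] by blast
  then have "\<forall>W\<in>B. finite {U\<in>B. W \<subseteq> U}"
    using op_like_finite_supersets[OF B(2)] by blast
  then show False
    using suslin_line_pi_base_infinite_supersets[OF assms B(1)] by blast
qed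

end
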